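(* Assume $B_{r,s}(\delta)$ is semisimple. If $\lambda,\mu\in\Lambda_{r,s}$ with $\lambda\ne\mu$, then there is a supersymmetric polynomial $p\in S_{r,s}[x;y]$ with $p\big(c(\lambda,1),\dots,c(\lambda,r+s)\big)\ne p\big(c(\mu,1),\dots,c(\mu,r+s)\big)$.
   Context: $B_{r,s}(\delta)$ is the walled Brauer algebra ($r,s\ge0$, $\delta\in\mathbb C$). It is known to be semisimple iff one of: $r=0$ or $s=0$; $\delta\notin\mathbb Z$; $|\delta|>r+s-2$; $\delta=0$ and $(r,s)\in\{(1,2),(1,3),(2,1),(3,1)\}$. A supersymmetric polynomial $p\in\mathbb C[x_1,\dots,x_r,y_1,\dots,y_s]$ is one symmetric in the $x$'s and separately in the $y$'s such that setting $x_r=-y_1=t$ yields a polynomial independent of $t$; $S_{r,s}[x;y]$ is the algebra of these; evaluation at $(a_1,\dots,a_{r+s})$ means $x_i=a_i$, $y_j=a_{r+j}$. $\Lambda^t_{r,s}$ is the set of pairs of partitions $(\lambda^L,\lambda^R)$ with $|\lambda^L|=r-t$, $|\lambda^R|=s-t$, and $\Lambda_{r,s}=\bigsqcup_{t=0}^{\min(r,s)}\Lambda^t_{r,s}$. For a partition $\nu$ and $1\le i\le|\nu|$, $\mathrm{cont}(\nu,i)$ is $b-a$ where $(a,b)$ (row, column) is the position of the box containing $i$ in the tableau filling the Young diagram of $\nu$ with $1,\dots,|\nu|$ in order left to right along successive rows. For $\lambda\in\Lambda^t_{r,s}$: $c(\lambda,i)=\mathrm{cont}(\lambda^L,i)$ for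 $1\le i\le r-t$; $c(\lambda,i)=0$ for $r-t<i\le r+t$; $c(\lambda,i)=\mathrm{cont}(\lambda^R,i-r-t)+\delta$ for $r+t<i\le r+s$. *)

theory Defs
  imports Complex_Main "HOL-Library.Poly_Mapping" "HOL-Combinatorics.Permutations"
begin

(* Multivariate polynomials over C in variables z_0, z_1, ... :
   finitely supported maps from monomials (exponent vectors) to coefficients. *)
type_synonym mpoly = "(nat \<Rightarrow>\<^sub>0 nat) \<Rightarrow>\<^sub>0 complex"

definition mpoly_eval :: "mpoly \<Rightarrow> (nat \<Rightarrow> complex) \<Rightarrow> complex" where
  "mpoly_eval p a = (\<Sum>m\<in>Poly_Mapping.keys p.
      Poly_Mapping.lookup p m * (\<Prod>i\<in>Poly_Mapping.keys m. a i ^ Poly_Mapping.lookup m i))"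

definition mpoly_vars_in :: "nat \<Rightarrow> mpoly \<Rightarrow> bool" where
  "mpoly_vars_in n p \<longleftrightarrow> (\<forall>m\<in>Poly_Mapping.keys p. Poly_Mapping.keys m \<subseteq> {..<n})"

(* Variables: x_i = z_(i-1) for 1<=i<=r,  y_j = z_(r+j-1) for 1<=j<=s.
   Evaluation at (a_1,...,a_(r+s)) is mpoly_eval p (\<lambda>k. a_(k+1)). *)
definition supersymmetric :: "nat \<Rightarrow> nat \<Rightarrow> mpoly \<Rightarrow> bool" where
  "supersymmetric r s p \<longleftrightarrow>
     mpoly_vars_in (r + s) p \<and>
     (\<forall>\<sigma> a. \<sigma> permutes {..<r} \<longrightarrow> mpoly_eval p (a \<circ> \<sigma>) = mpoly_eval p a) \<and>
     (\<forall>\<sigma> a. \<sigma> permutes {r..<r+s} \<longrightarrow> mpoly_eval p (a \<circ> \<sigma>) = mpoly_eval p a) \<and>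
     (0 < r \<and> 0 < s \<longrightarrow>
        (\<forall>a t. mpoly_eval p (a(r - 1 := t, r := - t)) = mpoly_eval p (a(r - 1 := 0, r := 0))))"

definition is_partition :: "nat list \<Rightarrow> nat \<Rightarrow> bool" where
  "is_partition \<nu> n \<longleftrightarrow> sorted_wrt (\<ge>) \<nu> \<and> (\<forall>k\<in>set \<nu>. 0 < k) \<and> sum_list \<nu> = n"

definition Lambda :: "nat \<Rightarrow> nat \<Rightarrow> (nat list \<times> nat list) set" where
  "Lambda r s = {(lL, lR). \<exists>t\<le>min r s. is_partition lL (r - t) \<and> is_partition lR (s - t)}"

(* content of box containing i in row-reading tableau; a = current row index (1-based) *)
fun cont_aux :: "nat \<Rightarrow> nat list \<Rightarrow> nat \<Rightarrow> int" where
  "cont_aux a [] i = 0"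
| "cont_aux a (l # ls) i = (if i \<le> l then int i - int a else cont_aux (Suc a) ls (i - l))"

definition cont :: "nat list \<Rightarrow> nat \<Rightarrow> int" where
  "cont \<nu> i = cont_aux 1 \<nu> i"

definition cval :: "complex \<Rightarrow> nat \<Rightarrow> nat \<Rightarrow> nat list \<times> nat list \<Rightarrow> nat \<Rightarrow> complex" where
  "cval \<delta> r s lam i =
     (let t = r - sum_list (fst lam) in
      if 1 \<le> i \<and> i \<le> r - t then of_int (cont (fst lam) i)
      else if r - t < i \<and> i \<le> r + t then 0
      else of_int (cont (snd lam) (i - r - t)) + \<delta>)"

(* Semisimplicity of the walled Brauer algebra B_{r,s}(delta), via the known criterion *)
definition wba_semisimple :: "nat \<Rightarrow> nat \<Rightarrow> complex \<Rightarrow> bool" where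
  "wba_semisimple r s \<delta> \<longleftrightarrow>
     r = 0 \<or> s = 0 \<or> \<delta> \<notin> \<int> \<or> cmod \<delta> > real (r + s) - 2 \<or>
     (\<delta> = 0 \<and> (r, s) \<in> {(1,2),(1,3),(2,1),(3,1)})"

end

theory Submission
  imports Defs "HOL-Library.Multiset" "HOL-Computational_Algebra.Polynomial"
begin

text \<open>
  For a univariate polynomial \<open>Q\<close>, \<open>p\<^sub>Q = \<Sum>\<^sub>i Q(x\<^sub>i) - \<Sum>\<^sub>j Q(-y\<^sub>j)\<close> is supersymmetric:
  setting \<open>x\<^sub>r = -y\<^sub>1 = t\<close> contributes \<open>Q(t) - Q(t)\<close>. Choosing \<open>Q\<close> by interpolation, these
  polynomials separate two points \<open>a, b\<close> unless the multiset of the \<open>x\<close>-coordinates of \<open>a\<close> and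
  the negated \<open>y\<close>-coordinates of \<open>b\<close> equals the one with \<open>a\<close> and \<open>b\<close> exchanged. For the points
  \<open>c(\<lambda>)\<close>, \<open>c(\<mu>)\<close> this multiset is, after cancelling zeros,
  \<open>cont(\<lambda>\<^sup>L) + {-(c + \<delta>) | c \<in> cont(\<mu>\<^sup>R)}\<close>, and contents determine a partition.
  Under semisimplicity the left contents, integers of absolute value \<open>< r\<close>, cannot coincide with
  any \<open>-(c + \<delta>)\<close>, so both halves can be compared separately; in the exceptional cases
  \<open>\<delta> = 0\<close>, \<open>min r s = 1\<close>, \<open>max r s \<in> {2, 3}\<close>, counting the contents equal to \<open>0\<close> (every
  nonempty partition of at most 3 has exactly one) forces \<open>\<lambda>\<close> and \<open>\<mu>\<close> to have the same \<open>t\<close>.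
\<close>

lemma mpoly_eval_superset:
  assumes "finite S" "Poly_Mapping.keys p \<subseteq> S"
  shows "mpoly_eval p a =
    (\<Sum>m\<in>S. Poly_Mapping.lookup p m * (\<Prod>i\<in>Poly_Mapping.keys m. a i ^ Poly_Mapping.lookup m i))"
  unfolding mpoly_eval_def using assms
  by (intro sum.mono_neutral_left) (auto simp: in_keys_iff)

lemma mpoly_eval_add: "mpoly_eval (p + q) a = mpoly_eval p a + mpoly_eval q a"
proof -
  let ?S = "Poly_Mapping.keys p \<union> Poly_Mapping.keys q"
  have "finite ?S" by simp
  from mpoly_eval_superset[OF this] show ?thesis
    using keys_add[of p q] by (simp add: lookup_add sum.distrib distrib_right)
qed

lemma mpoly_eval_sum: "mpoly_eval (\<Sum>i\<in>I. f i) a = (\<Sum>i\<in>I. mpoly_eval (f i) a)"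
  by (induction I rule: infinite_finite_induct) (simp_all add: mpoly_eval_add mpoly_eval_def[of 0])

lemma mpoly_eval_single_single:
  "mpoly_eval (Poly_Mapping.single (Poly_Mapping.single k n) c) a = c * a k ^ n"
  using mpoly_eval_superset[of "{Poly_Mapping.single k n}" "Poly_Mapping.single (Poly_Mapping.single k n) c" a]
  by auto

definition mpoly_of_poly :: "complex poly \<Rightarrow> nat \<Rightarrow> mpoly" where
  "mpoly_of_poly Q k = (\<Sum>n\<le>degree Q. Poly_Mapping.single (Poly_Mapping.single k n) (coeff Q n))"

lemma mpoly_eval_mpoly_of_poly: "mpoly_eval (mpoly_of_poly Q k) a = poly Q (a k)"
  by (simp add: mpoly_of_poly_def mpoly_eval_sum mpoly_eval_single_single poly_altdef)

lemma keys_mpoly_of_poly: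
  "m \<in> Poly_Mapping.keys (mpoly_of_poly Q k) \<Longrightarrow> Poly_Mapping.keys m \<subseteq> {k}"
  unfolding mpoly_of_poly_def using keys_sum by (fastforce split: if_splits)

lemma mpoly_vars_in_sum:
  "(\<And>i. i \<in> I \<Longrightarrow> mpoly_vars_in n (f i)) \<Longrightarrow> mpoly_vars_in n (\<Sum>i\<in>I. f i)"
  unfolding mpoly_vars_in_def using keys_sum[of f I] by blast

lemma mpoly_vars_in_add:
  "mpoly_vars_in n p \<Longrightarrow> mpoly_vars_in n q \<Longrightarrow> mpoly_vars_in n (p + q)"
  unfolding mpoly_vars_in_def using keys_add[of p q] by blast

lemma mpoly_vars_in_mpoly_of_poly: "k < n \<Longrightarrow> mpoly_vars_in n (mpoly_of_poly Q k)"
  unfolding mpoly_vars_in_def using keys_mpoly_of_poly by fastforce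

lemma poly_sum_mset_separates:
  fixes A B :: "'a::{idom,ring_char_0} multiset"
  assumes "A \<noteq> B"
  shows "\<exists>Q. (\<Sum>x\<in>#A. poly Q x) \<noteq> (\<Sum>x\<in>#B. poly Q x)"
proof -
  obtain v where v: "count A v \<noteq> count B v" using assms by (meson multiset_eqI)
  define W where "W = (set_mset A \<union> set_mset B) - {v}"
  define Q where "Q = (\<Prod>w\<in>W. [:-w, 1:])"
  have "finite W" by (simp add: W_def)
  then have poly_Q: "poly Q x = (\<Prod>w\<in>W. x - w)" for x by (simp add: Q_def poly_prod)
  have "poly Q v \<noteq> 0" using \<open>finite W\<close> by (simp add: poly_Q W_def)
  \<comment> \<open>\<open>Q\<close> vanishes on the support of \<open>A + B\<close> except at \<open>v\<close>\<close>
  have sum_Q: "(\<Sum>x\<in>#M. poly Q x) = poly Q v * of_nat (count M v)"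
    if "set_mset M \<subseteq> set_mset A \<union> set_mset B" for M
  proof -
    have "image_mset (poly Q) M = image_mset (\<lambda>x. if x = v then poly Q v else 0) M"
      using that \<open>finite W\<close> by (intro image_mset_cong) (auto simp: poly_Q W_def)
    then show ?thesis by (simp add: sum_mset_delta)
  qed
  have "(\<Sum>x\<in>#A. poly Q x) \<noteq> (\<Sum>x\<in>#B. poly Q x)"
    using sum_Q[of A] sum_Q[of B] \<open>poly Q v \<noteq> 0\<close> v by simp
  then show ?thesis by blast
qed

lemma multiset_union_eq_by_predicate:
  assumes "\<forall>x\<in>#A. P x" "\<forall>x\<in>#A'. P x" "\<forall>x\<in>#B. \<not> P x" "\<forall>x\<in>#B'. \<not> P x"
    and "A + B = A' + B'"
  shows "A = A' \<and> B = B'"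
proof -
  have "filter_mset P (A + B) = filter_mset P (A' + B')"
    "filter_mset (\<lambda>x. \<not> P x) (A + B) = filter_mset (\<lambda>x. \<not> P x) (A' + B')"
    using assms(5) by simp_all
  moreover have "filter_mset Q M = M" if "\<forall>x\<in>#M. Q x" for Q and M :: "'a multiset"
    using that by (simp add: filter_mset_eq_conv)
  ultimately show ?thesis using assms(1-4) by (simp add: filter_mset_eq_mempty_iff[THEN iffD2])
qed

lemma count_image_mset_inj: "inj f \<Longrightarrow> count (image_mset f M) (f x) = count M x"
  by (induction M) (auto simp: inj_eq)

section \<open>Power-sum supersymmetric polynomials\<close>

definition x_coords :: "nat \<Rightarrow> (nat \<Rightarrow> 'a) \<Rightarrow> 'a multiset" where
  "x_coords r a = image_mset a (mset_set {..<r})"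

definition neg_y_coords :: "nat \<Rightarrow> nat \<Rightarrow> (nat \<Rightarrow> 'a::uminus) \<Rightarrow> 'a multiset" where
  "neg_y_coords r s a = image_mset (\<lambda>j. - a (r + j)) (mset_set {..<s})"

definition power_sum_mpoly :: "complex poly \<Rightarrow> nat \<Rightarrow> nat \<Rightarrow> mpoly" where
  "power_sum_mpoly Q r s =
     (\<Sum>i<r. mpoly_of_poly Q i) + (\<Sum>j<s. mpoly_of_poly (- pcompose Q [:0, -1:]) (r + j))"

lemma mpoly_eval_power_sum_mpoly:
  "mpoly_eval (power_sum_mpoly Q r s) a = (\<Sum>i<r. poly Q (a i)) - (\<Sum>j<s. poly Q (- a (r + j)))"
  by (simp add: power_sum_mpoly_def mpoly_eval_add mpoly_eval_sum mpoly_eval_mpoly_of_poly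
      poly_pcompose sum_negf)

lemma mpoly_eval_power_sum_mpoly_coords:
  "mpoly_eval (power_sum_mpoly Q r s) a =
     (\<Sum>x\<in>#x_coords r a. poly Q x) - (\<Sum>y\<in>#neg_y_coords r s a. poly Q y)"
  by (simp add: mpoly_eval_power_sum_mpoly x_coords_def neg_y_coords_def sum_unfold_sum_mset
      multiset.map_comp comp_def)

lemma supersymmetric_power_sum_mpoly: "supersymmetric r s (power_sum_mpoly Q r s)"
proof -
  let ?F = "\<lambda>a. (\<Sum>i<r. poly Q (a i)) - (\<Sum>j<s. poly Q (- a (r + j)))"
  have shift: "(\<Sum>j<s. g (r + j)) = (\<Sum>k\<in>{r..<r+s}. g k)" for g :: "nat \<Rightarrow> complex"
    by (rule sum.reindex_bij_witness[of _ "\<lambda>k. k - r" "\<lambda>j. r + j"]) auto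
  have "mpoly_vars_in (r + s) (power_sum_mpoly Q r s)"
    unfolding power_sum_mpoly_def
    by (intro mpoly_vars_in_add mpoly_vars_in_sum mpoly_vars_in_mpoly_of_poly) auto
  moreover have "?F (a \<circ> \<sigma>) = ?F a" if "\<sigma> permutes {..<r}" for \<sigma> a
  proof -
    have "\<sigma> (r + j) = r + j" for j using permutes_not_in[OF that] by auto
    then show ?thesis using sum.permute[OF that, of "\<lambda>i. poly Q (a i)"] by (simp add: comp_def)
  qed
  moreover have "?F (a \<circ> \<sigma>) = ?F a" if "\<sigma> permutes {r..<r+s}" for \<sigma> a
  proof -
    have "\<sigma> i = i" if "i < r" for i using permutes_not_in[OF \<open>\<sigma> permutes _\<close>] that by auto
    then show ?thesis
      using sum.permute[OF that, of "\<lambda>k. poly Q (- a k)"]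
        shift[of "\<lambda>k. poly Q (- a (\<sigma> k))"] shift[of "\<lambda>k. poly Q (- a k)"]
      by (simp add: comp_def)
  qed
  moreover have "?F (a(r - 1 := t, r := - t)) = ?F (a(r - 1 := 0, r := 0))"
    if "0 < r" "0 < s" for a t
  proof -
    have "{..<r} = insert (r - 1) {..<r - 1}" "{..<s} = insert 0 {1..<s}" using that by auto
    then have split: "?F b = (\<Sum>i<r - 1. poly Q (b i)) + poly Q (b (r - 1)) - poly Q (- b r)
        - (\<Sum>j\<in>{1..<s}. poly Q (- b (r + j)))" for b
      by simp
    have unchanged: "(\<Sum>i<r - 1. poly Q ((a(r - 1 := x, r := y)) i)) = (\<Sum>i<r - 1. poly Q (a i))"
      "(\<Sum>j\<in>{1..<s}. poly Q (- (a(r - 1 := x, r := y)) (r + j))) = (\<Sum>j\<in>{1..<s}. poly Q (- a (r + j)))"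
      for x y
      by (rule sum.cong; auto)+
    show ?thesis unfolding split unchanged using that by auto
  qed
  ultimately show ?thesis
    unfolding supersymmetric_def mpoly_eval_power_sum_mpoly by blast
qed

lemma supersymmetric_separates:
  assumes "x_coords r a + neg_y_coords r s b \<noteq> x_coords r b + neg_y_coords r s a"
  shows "\<exists>p. supersymmetric r s p \<and> mpoly_eval p a \<noteq> mpoly_eval p b"
proof -
  obtain Q where Q: "(\<Sum>x\<in>#x_coords r a + neg_y_coords r s b. poly Q x) \<noteq>
      (\<Sum>x\<in>#x_coords r b + neg_y_coords r s a. poly Q x)"
    using poly_sum_mset_separates[OF assms] by blast
  have "mpoly_eval (power_sum_mpoly Q r s) a \<noteq> mpoly_eval (power_sum_mpoly Q r s) b"
    using Q by (auto simp: mpoly_eval_power_sum_mpoly_coords algebra_simps)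
  then show ?thesis using supersymmetric_power_sum_mpoly by blast
qed

section \<open>Contents of partitions\<close>

text \<open>Rows are numbered from \<open>a\<close>, so \<open>contents_from 1 \<nu>\<close> lists \<open>cont(\<nu>, 1), \<dots>, cont(\<nu>, |\<nu>|)\<close>.\<close>

definition contents_from :: "nat \<Rightarrow> nat list \<Rightarrow> int list" where
  "contents_from a \<nu> = map (cont_aux a \<nu>) [1..<sum_list \<nu> + 1]"

lemma contents_from_Nil [simp]: "contents_from a [] = []"
  by (simp add: contents_from_def)

lemma contents_from_Cons:
  "contents_from a (l # \<nu>) = map (\<lambda>i. int i - int a) [1..<l + 1] @ contents_from (Suc a) \<nu>"
proof (rule nth_equalityI)
  show "length (contents_from a (l # \<nu>)) =
      length (map (\<lambda>i. int i - int a) [1..<l + 1] @ contents_from (Suc a) \<nu>)"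
    by (simp add: contents_from_def del: upt_Suc)
next
  fix k assume "k < length (contents_from a (l # \<nu>))"
  then have "k < l + sum_list \<nu>" by (simp add: contents_from_def del: upt_Suc)
  moreover have "Suc k - l = Suc (k - l)" if "\<not> k < l" using that by simp
  ultimately show "contents_from a (l # \<nu>) ! k =
      (map (\<lambda>i. int i - int a) [1..<l + 1] @ contents_from (Suc a) \<nu>) ! k"
    by (cases "k < l") (simp_all add: contents_from_def nth_append del: upt_Suc)
qed

lemma contents_from_le:
  "\<forall>k\<in>set \<nu>. k \<le> M \<Longrightarrow> x \<in> set (contents_from a \<nu>) \<Longrightarrow> x \<le> int M - int a"
proof (induction \<nu> arbitrary: a)
  case (Cons l \<nu>)
  then show ?case by (force simp: contents_from_Cons dest: Cons.IH[of "Suc a"])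
qed simp

lemma contents_from_bounds:
  "\<forall>k\<in>set \<nu>. 0 < k \<Longrightarrow> x \<in> set (contents_from a \<nu>) \<Longrightarrow>
     2 - int (sum_list \<nu>) - int a \<le> x \<and> x \<le> int (sum_list \<nu>) - int a"
proof (induction \<nu> arbitrary: a)
  case (Cons l \<nu>)
  then show ?case by (force simp: contents_from_Cons dest: Cons.IH[of "Suc a"])
qed simp

lemma abs_content_less:
  "is_partition \<nu> n \<Longrightarrow> x \<in> set (contents_from 1 \<nu>) \<Longrightarrow> \<bar>x\<bar> < int n"
  unfolding is_partition_def using contents_from_bounds[of \<nu> x 1] by auto

lemma contents_from_inj:
  assumes "sorted_wrt (\<ge>) \<nu>" "\<forall>k\<in>set \<nu>. 0 < k" "sorted_wrt (\<ge>) \<nu>'" "\<forall>k\<in>set \<nu>'. 0 < k"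
    and "mset (contents_from a \<nu>) = mset (contents_from a \<nu>')"
  shows "\<nu> = \<nu>'"
  using assms
proof (induction \<nu> arbitrary: \<nu>' a)
  case Nil
  then show ?case by (cases \<nu>') (auto simp: contents_from_Cons)
next
  case (Cons l \<nu>)
  then obtain l' \<nu>'' where \<nu>': "\<nu>' = l' # \<nu>''"
    by (cases \<nu>') (auto simp: contents_from_Cons)
  \<comment> \<open>the first row is read off from the largest content \<open>l - a\<close>\<close>
  have same_set: "set (contents_from a (l # \<nu>)) = set (contents_from a (l' # \<nu>''))"
    using Cons.prems(5) \<nu>' by (metis set_mset_mset)
  have "int l - int a \<in> set (contents_from a (l # \<nu>))"
    "int l' - int a \<in> set (contents_from a (l' # \<nu>''))"
    using Cons.prems \<nu>' by (force simp: contents_from_Cons)+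
  moreover have "\<forall>k\<in>set (l # \<nu>). k \<le> l" "\<forall>k\<in>set (l' # \<nu>''). k \<le> l'"
    using Cons.prems \<nu>' by auto
  ultimately have "int l - int a \<le> int l' - int a" "int l' - int a \<le> int l - int a"
    using contents_from_le same_set by blast+
  then have "l = l'" by simp
  with Cons.prems \<nu>' have "mset (contents_from (Suc a) \<nu>) = mset (contents_from (Suc a) \<nu>'')"
    by (simp add: contents_from_Cons)
  with Cons.IH Cons.prems \<nu>' \<open>l = l'\<close> show ?case by auto
qed

lemma is_partition_le_one:
  assumes "is_partition \<nu> n" "n \<le> 1"
  shows "\<nu> = replicate n 1"
proof (cases \<nu>)
  case (Cons l \<nu>')
  with assms have "0 < l" "\<forall>k\<in>set \<nu>'. 0 < k" "l + sum_list \<nu>' = n"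
    by (auto simp: is_partition_def)
  with assms(2) have "\<nu>' = []" "l = 1" "n = 1" by auto (cases \<nu>'; auto)
  with Cons show ?thesis by simp
qed (use assms in \<open>simp add: is_partition_def\<close>)

lemma count_zero_contents:
  assumes "is_partition \<nu> n" "n \<le> 3"
  shows "count (mset (contents_from 1 \<nu>)) 0 = (if n = 0 then 0 else 1)"
proof (cases \<nu>)
  case Nil
  then show ?thesis using assms by (simp add: is_partition_def)
next
  case (Cons l \<nu>')
  with assms have "1 \<le> l" "\<forall>k\<in>set \<nu>'. k \<le> l" "l + sum_list \<nu>' \<le> 3" "n \<noteq> 0"
    by (auto simp: is_partition_def)
  \<comment> \<open>the rows below the first have length at most 1, so their contents are negative\<close>
  then have "\<forall>k\<in>set \<nu>'. k \<le> 1" using member_le_sum_list by fastforce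
  then have "0 \<notin> set (contents_from (Suc 1) \<nu>')"
    using contents_from_le[of \<nu>' 1 _ "Suc 1"] by force
  moreover have "0 \<notin> set (map (\<lambda>i. int i - 1) [Suc 1..<l + 1])" by auto
  moreover have "[1..<l + 1] = 1 # [Suc 1..<l + 1]" using \<open>1 \<le> l\<close> by (simp add: upt_conv_Cons)
  ultimately show ?thesis
    using \<open>n \<noteq> 0\<close> by (simp add: Cons contents_from_Cons count_eq_zero_iff del: upt_Suc)
qed

section \<open>The points \<open>c(\<lambda>)\<close>\<close>

definition left_content_mset :: "nat list \<Rightarrow> complex multiset" where
  "left_content_mset \<nu> = image_mset of_int (mset (contents_from 1 \<nu>))"

definition right_content_mset :: "complex \<Rightarrow> nat list \<Rightarrow> complex multiset" where
  "right_content_mset \<delta> \<nu> = image_mset (\<lambda>c. - (of_int c + \<delta>)) (mset (contents_from 1 \<nu>))"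

lemma x_coords_cval:
  assumes "sum_list lL = r - t" "t \<le> r"
  shows "x_coords r (\<lambda>k. cval \<delta> r s (lL, lR) (Suc k)) = left_content_mset lL + replicate_mset t 0"
proof -
  have "map (\<lambda>k. cval \<delta> r s (lL, lR) (Suc k)) [0..<r] = map of_int (contents_from 1 lL) @ replicate t 0"
  proof (rule nth_equalityI)
    fix i assume "i < length (map (\<lambda>k. cval \<delta> r s (lL, lR) (Suc k)) [0..<r])"
    with assms show "map (\<lambda>k. cval \<delta> r s (lL, lR) (Suc k)) [0..<r] ! i =
        (map of_int (contents_from 1 lL) @ replicate t 0) ! i"
      by (cases "i < r - t") (simp_all add: contents_from_def nth_append cval_def cont_def del: upt_Suc)
  qed (use assms in \<open>simp add: contents_from_def del: upt_Suc\<close>)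
  then show ?thesis
    unfolding x_coords_def left_content_mset_def mset_set_upto_eq_mset_upto by (simp del: mset_upt flip: mset_map)
qed

lemma neg_y_coords_cval:
  assumes "sum_list lL = r - t" "sum_list lR = s - t" "t \<le> r" "t \<le> s"
  shows "neg_y_coords r s (\<lambda>k. cval \<delta> r s (lL, lR) (Suc k)) =
    replicate_mset t 0 + right_content_mset \<delta> lR"
proof -
  have "map (\<lambda>j. - cval \<delta> r s (lL, lR) (Suc (r + j))) [0..<s] =
      replicate t 0 @ map (\<lambda>c. - (of_int c + \<delta>)) (contents_from 1 lR)"
  proof (rule nth_equalityI)
    fix j assume "j < length (map (\<lambda>j. - cval \<delta> r s (lL, lR) (Suc (r + j))) [0..<s])"
    moreover have "Suc (r + j) - r - t = Suc (j - t)" "\<not> Suc (r + j) \<le> r - t" if "\<not> j < t"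
      using that by simp_all
    ultimately show "map (\<lambda>j. - cval \<delta> r s (lL, lR) (Suc (r + j))) [0..<s] ! j =
        (replicate t 0 @ map (\<lambda>c. - (of_int c + \<delta>)) (contents_from 1 lR)) ! j"
      using assms
      by (cases "j < t") (simp_all add: contents_from_def nth_append cval_def cont_def del: upt_Suc)
  qed (use assms in \<open>simp add: contents_from_def del: upt_Suc\<close>)
  then show ?thesis
    unfolding neg_y_coords_def right_content_mset_def mset_set_upto_eq_mset_upto
    by (simp del: mset_upt flip: mset_map)
qed

lemma mset_contents_eq_imp_eq:
  "is_partition \<nu> n \<Longrightarrow> is_partition \<nu>' n' \<Longrightarrow>
     mset (contents_from 1 \<nu>) = mset (contents_from 1 \<nu>') \<Longrightarrow> \<nu> = \<nu>'"
  unfolding is_partition_def by (intro contents_from_inj) auto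

lemma left_content_mset_eq_imp_eq:
  "is_partition \<nu> n \<Longrightarrow> is_partition \<nu>' n' \<Longrightarrow>
     left_content_mset \<nu> = left_content_mset \<nu>' \<Longrightarrow> \<nu> = \<nu>'"
  unfolding left_content_mset_def by (metis mset_contents_eq_imp_eq multiset.inj_map_strong of_int_eq_iff)

lemma right_content_mset_eq_imp_eq:
  "is_partition \<nu> n \<Longrightarrow> is_partition \<nu>' n' \<Longrightarrow>
     right_content_mset \<delta> \<nu> = right_content_mset \<delta> \<nu>' \<Longrightarrow> \<nu> = \<nu>'"
  unfolding right_content_mset_def
  by (rule mset_contents_eq_imp_eq, assumption+) (rule multiset.inj_map_strong; simp)

lemma content_msets_determine_generic:
  assumes "r = 0 \<or> s = 0 \<or> \<delta> \<notin> \<int> \<or> real (r + s) - 2 < cmod \<delta>"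
    and "is_partition lL nl" "nl \<le> r" "is_partition lR nr" "nr \<le> s"
    and "is_partition mL ml" "ml \<le> r" "is_partition mR mr" "mr \<le> s"
    and "left_content_mset lL + right_content_mset \<delta> mR = left_content_mset mL + right_content_mset \<delta> lR"
  shows "lL = mL \<and> lR = mR"
proof -
  define P where "P v \<longleftrightarrow> (\<exists>k. v = of_int k \<and> \<bar>k\<bar> < int r)" for v :: complex
  have left_P: "\<forall>v\<in>#left_content_mset \<nu>. P v" if "is_partition \<nu> n" "n \<le> r" for \<nu> n
    using abs_content_less[OF that(1)] that(2) by (force simp: left_content_mset_def P_def)
  have right_not_P: "\<forall>v\<in>#right_content_mset \<delta> \<nu>. \<not> P v" if "is_partition \<nu> n" "n \<le> s" for \<nu> n
  proof (intro ballI notI)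
    fix v assume "v \<in># right_content_mset \<delta> \<nu>" "P v"
    then obtain c k where c: "c \<in> set (contents_from 1 \<nu>)" and k: "\<bar>k\<bar> < int r"
      and "- (of_int c + \<delta>) = (of_int k :: complex)"
      by (auto simp: right_content_mset_def P_def)
    then have \<delta>: "\<delta> = of_int (- k - c)"
      by (metis add.commute add_diff_cancel of_int_add uminus_add_conv_diff)
    have "\<bar>c\<bar> < int s" using abs_content_less[OF that(1) c] that(2) by simp
    with k have "\<bar>- k - c\<bar> \<le> int (r + s) - 2" by arith
    then have "real_of_int \<bar>- k - c\<bar> \<le> real_of_int (int (r + s) - 2)" by (simp only: of_int_le_iff)
    then have "cmod \<delta> \<le> real (r + s) - 2" unfolding \<delta> norm_of_int by simp
    moreover have "\<delta> \<in> \<int>" unfolding \<delta> by simp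
    ultimately show False using assms(1) k \<open>\<bar>c\<bar> < int s\<close> by auto
  qed
  have "left_content_mset lL = left_content_mset mL \<and> right_content_mset \<delta> mR = right_content_mset \<delta> lR"
    by (rule multiset_union_eq_by_predicate[OF left_P[OF assms(2,3)] left_P[OF assms(6,7)]
          right_not_P[OF assms(8,9)] right_not_P[OF assms(4,5)] assms(10)])
  then show ?thesis
    using left_content_mset_eq_imp_eq[OF assms(2,6)] right_content_mset_eq_imp_eq[OF assms(8,4)] by blast
qed

lemma content_msets_determine_small:
  assumes "(r, s) \<in> {(1,2), (1,3), (2,1), (3,1)}"
    and "is_partition lL (r - t)" "is_partition lR (s - t)" "t \<le> min r s"
    and "is_partition mL (r - u)" "is_partition mR (s - u)" "u \<le> min r s"
    and eq: "left_content_mset lL + right_content_mset 0 mR = left_content_mset mL + right_content_mset 0 lR"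
  shows "lL = mL \<and> lR = mR"
proof -
  have "count (left_content_mset \<nu>) 0 = count (mset (contents_from 1 \<nu>)) 0"
    "count (right_content_mset 0 \<nu>) 0 = count (mset (contents_from 1 \<nu>)) 0" for \<nu>
    using count_image_mset_inj[of "of_int :: int \<Rightarrow> complex" _ 0]
      count_image_mset_inj[of "\<lambda>c. - (of_int c + 0) :: complex" _ 0]
    by (simp_all add: left_content_mset_def right_content_mset_def inj_def)
  moreover have "r \<le> 3" "s \<le> 3" using assms(1) by auto
  ultimately have zeros: "(if r - t = 0 then 0 else 1) + (if s - u = 0 then 0 else 1) =
      (if r - u = 0 then 0 else (1::nat)) + (if s - t = 0 then 0 else 1)"
    using arg_cong[OF eq, of "\<lambda>M. count M 0"]
      count_zero_contents[OF assms(2)] count_zero_contents[OF assms(3)]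
      count_zero_contents[OF assms(5)] count_zero_contents[OF assms(6)]
    by simp
  show ?thesis
  proof (cases "r = 1")
    case True
    with assms(1,4,7) have "t \<le> 1" "u \<le> 1" "s - t \<noteq> 0" "s - u \<noteq> 0" by auto
    with zeros True have "t = u" by (cases "t = 0"; cases "u = 0") simp_all
    with True have "lL = mL" using is_partition_le_one[OF assms(2)] is_partition_le_one[OF assms(5)] by simp
    with eq have "right_content_mset 0 mR = right_content_mset 0 lR" by simp
    then have "mR = lR" by (rule right_content_mset_eq_imp_eq[OF assms(6,3)])
    with \<open>lL = mL\<close> show ?thesis by simp
  next
    case False
    with assms(1) have "s = 1" by auto
    with assms(1,4,7) have "t \<le> 1" "u \<le> 1" "r - t \<noteq> 0" "r - u \<noteq> 0" by auto
    with zeros \<open>s = 1\<close> have "t = u" by (cases "t = 0"; cases "u = 0") simp_all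
    with \<open>s = 1\<close> have "lR = mR" using is_partition_le_one[OF assms(3)] is_partition_le_one[OF assms(6)] by simp
    with eq have "left_content_mset lL = left_content_mset mL" by simp
    then have "lL = mL" by (rule left_content_mset_eq_imp_eq[OF assms(2,5)])
    with \<open>lR = mR\<close> show ?thesis by simp
  qed
qed

lemma content_msets_determine:
  assumes "wba_semisimple r s \<delta>"
    and "is_partition lL (r - t)" "is_partition lR (s - t)" "t \<le> min r s"
    and "is_partition mL (r - u)" "is_partition mR (s - u)" "u \<le> min r s"
    and "left_content_mset lL + right_content_mset \<delta> mR = left_content_mset mL + right_content_mset \<delta> lR"
  shows "lL = mL \<and> lR = mR"
proof (cases "\<delta> = 0 \<and> (r, s) \<in> {(1,2), (1,3), (2,1), (3,1)}")
  case True
  then show ?thesis using content_msets_determine_small[of r s lL t lR mL u mR] assms(2-) by simp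
next
  case False
  with assms(1) have "r = 0 \<or> s = 0 \<or> \<delta> \<notin> \<int> \<or> real (r + s) - 2 < cmod \<delta>"
    unfolding wba_semisimple_def by blast
  then show ?thesis
    using assms(2,3,5,6,8) by (rule content_msets_determine_generic[OF _ _ diff_le_self _ diff_le_self
        _ diff_le_self _ diff_le_self])
qed

theorem mainTheorem6:
  fixes r s :: nat and \<delta> :: complex and lam mu :: "nat list \<times> nat list"
  assumes "wba_semisimple r s \<delta>"
    and "lam \<in> Lambda r s" and "mu \<in> Lambda r s" and "lam \<noteq> mu"
  shows "\<exists>p. supersymmetric r s p \<and>
           mpoly_eval p (\<lambda>k. cval \<delta> r s lam (Suc k)) \<noteq> mpoly_eval p (\<lambda>k. cval \<delta> r s mu (Suc k))"
proof (rule supersymmetric_separates)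
  obtain lL lR t where lam: "lam = (lL, lR)" "t \<le> min r s"
    and t: "is_partition lL (r - t)" "is_partition lR (s - t)"
    using assms(2) unfolding Lambda_def by auto
  obtain mL mR u where mu: "mu = (mL, mR)" "u \<le> min r s"
    and u: "is_partition mL (r - u)" "is_partition mR (s - u)"
    using assms(3) unfolding Lambda_def by auto
  have "left_content_mset lL + right_content_mset \<delta> mR \<noteq> left_content_mset mL + right_content_mset \<delta> lR"
    using content_msets_determine[OF assms(1) t lam(2) u mu(2)] assms(4) lam mu by blast
  with t u lam mu show "x_coords r (\<lambda>k. cval \<delta> r s lam (Suc k)) + neg_y_coords r s (\<lambda>k. cval \<delta> r s mu (Suc k))
      \<noteq> x_coords r (\<lambda>k. cval \<delta> r s mu (Suc k)) + neg_y_coords r s (\<lambda>k. cval \<delta> r s lam (Suc k))"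
    by (simp add: x_coords_cval neg_y_coords_cval is_partition_def ac_simps)
qed

end
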